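(* The three linear orders $I_{even}$, $I_{odd}$ and $I$ are pairwise non-isomorphic.
   Context: Ordinal exponents have their usual ordinal meaning, with $\omega^\omega=\sup_{n<\omega}\omega^n$; $kZ$ denotes $k$ consecutive copies of the order $Z$. The $\omega^*$-sum $\cdots+M_2+M_1$ has $M_{k+1}$ entirely to the left of $M_k$. For $n\ge 0$ let $L_n=\cdots+3\omega^{n+3}+2\omega^{n+2}+\omega^{n+1}+\omega^\omega$ (the $\omega^*$-sum whose $k$-th summand from the right, $k\ge1$, is $k\,\omega^{n+k}$, followed by $\omega^\omega$), and for $n\ge1$ let $L_{-n}=\cdots+(n+3)\omega^{3}+(n+2)\omega^{2}+(n+1)\omega+\omega^\omega$ (the $\omega^*$-sum whose $k$-th summand from the right is $(n+k)\omega^k$, followed by $\omega^\omega$). For orders $M_i$ ($i\in\mathbb{Z}$), $\cdots+M_{-1}+M_0+M_1+\cdots$ denotes the $\mathbb{Z}$-indexed ordered sum. Define \[ I_{even}=\cdots+L_{-2}+L_0+L_2+\cdots,\quad I_{odd}=\cdots+L_{-1}+L_1+L_3+\cdots,\quad I=\cdots+L_{-1}+L_0+L_1+\cdots, \] the $\mathbb{Z}$-sums of the $L_i$ over even $i$, odd $i$, and all $i$ respectively, in increasing order of index. *)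

theory Defs
  imports Main
begin

text \<open>Linear orders are represented as reflexive relations (non-strict orders);
  the underlying set of an order r is Field r.\<close>

definition ord_iso :: "'a rel \<Rightarrow> 'b rel \<Rightarrow> bool" where
  "ord_iso r s \<longleftrightarrow> (\<exists>f. bij_betw f (Field r) (Field s) \<and>
      (\<forall>x\<in>Field r. \<forall>y\<in>Field r. (x, y) \<in> r \<longleftrightarrow> (f x, f y) \<in> s))"

definition osum :: "'i rel \<Rightarrow> ('i \<Rightarrow> 'a rel) \<Rightarrow> ('i \<times> 'a) rel" where
  "osum R M = {((i, x), (j, y)). i \<in> Field R \<and> j \<in> Field R \<and>
      x \<in> Field (M i) \<and> y \<in> Field (M j) \<and>
      ((i \<noteq> j \<and> (i, j) \<in> R) \<or> (i = j \<and> (x, y) \<in> M i))}"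

definition oplus :: "'a rel \<Rightarrow> 'b rel \<Rightarrow> ('a + 'b) rel" where
  "oplus r s = {(Inl x, Inl y) | x y. (x, y) \<in> r} \<union> {(Inr x, Inr y) | x y. (x, y) \<in> s}
     \<union> {(Inl x, Inr y) | x y. x \<in> Field r \<and> y \<in> Field s}"

definition fin_ord :: "nat \<Rightarrow> nat rel" where
  "fin_ord k = {(i, j). i \<le> j \<and> j < k}"

text \<open>The index order of an omega*-sum with summands indexed by k \<ge> 1,
  the (k+1)-th summand lying to the left of the k-th.\<close>
definition omega_star_pos :: "nat rel" where
  "omega_star_pos = {(i, j). 1 \<le> j \<and> j \<le> i}"

text \<open>The ordinal omega^m: lists of naturals of length m (Cantor normal form
  digits, most significant first), ordered lexicographically.\<close>
definition omega_pow :: "nat \<Rightarrow> nat list rel" where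
  "omega_pow m = {(xs, ys). length xs = m \<and> length ys = m \<and>
      (xs = ys \<or> (xs, ys) \<in> lenlex {(a, b). a < b})}"

text \<open>The ordinal omega^omega = sup of omega^n: finite digit lists (most significant
  first) without leading zero, ordered by length and then lexicographically.
  (omega^n embeds as an initial segment by prefixing a zero digit.)\<close>
definition omega_omega :: "nat list rel" where
  "omega_omega = {(xs, ys). (xs = [] \<or> hd xs \<noteq> 0) \<and> (ys = [] \<or> hd ys \<noteq> 0) \<and>
      (xs = ys \<or> (xs, ys) \<in> lenlex {(a, b). a < b})}"

definition copies_omega_pow :: "nat \<Rightarrow> nat \<Rightarrow> (nat \<times> nat list) rel" where
  "copies_omega_pow k m = osum (fin_ord k) (\<lambda>_. omega_pow m)"

text \<open>Lgen a b = ... + (a+3) omega^(b+3) + (a+2) omega^(b+2) + (a+1) omega^(b+1) + omega^omega.\<close>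
definition Lgen :: "nat \<Rightarrow> nat \<Rightarrow> ((nat \<times> (nat \<times> nat list)) + nat list) rel" where
  "Lgen a b = oplus (osum omega_star_pos (\<lambda>k. copies_omega_pow (a + k) (b + k))) omega_omega"

text \<open>L_n for n \<ge> 0 has k-th summand k omega^(n+k); L_{-n} has k-th summand (n+k) omega^k.\<close>
definition L :: "int \<Rightarrow> ((nat \<times> (nat \<times> nat list)) + nat list) rel" where
  "L i = (if 0 \<le> i then Lgen 0 (nat i) else Lgen (nat (- i)) 0)"

definition I_even :: "(int \<times> ((nat \<times> (nat \<times> nat list)) + nat list)) rel" where
  "I_even = osum {(i, j). even i \<and> even j \<and> i \<le> j} L"

definition I_odd :: "(int \<times> ((nat \<times> (nat \<times> nat list)) + nat list)) rel" where
  "I_odd = osum {(i, j). odd i \<and> odd j \<and> i \<le> j} L"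

definition I_all :: "(int \<times> ((nat \<times> (nat \<times> nat list)) + nat list)) rel" where
  "I_all = osum {(i, j). i \<le> j} L"

end

theory Submission
  imports Defs
begin

text \<open>For an order r let D(0) be its field and D(e+1) the set of points x such that
  every y < x is followed by a point of D(e) strictly between y and x. These sets are
  invariant under order isomorphisms. In the summand L(j) = Lgen a b (so j = b - a) the
  derived rank of every point is computed explicitly. It follows that for every point u of
  L(j) and every large E = b + k, the last point g \<le> u of D(E+1) is the first point of
  the block (a + k) omega^(b+k), and the points of D(E) in [g, u) are the first points of
  the a + k copies of omega^(b+k) in that block together with the first point of the block
  to its left. So E + 1 minus their number is j, and an isomorphism between sums of the
  L(i) preserves the index i. The index 1 occurs in I_odd and in I but not in I_even, and
  the index 0 occurs in I but not in I_odd.\<close>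

section \<open>Left-derived sets of an order\<close>

definition rless :: "'a rel \<Rightarrow> 'a \<Rightarrow> 'a \<Rightarrow> bool" where
  "rless r x y \<longleftrightarrow> (x, y) \<in> r \<and> x \<noteq> y"

fun derived :: "'a rel \<Rightarrow> nat \<Rightarrow> 'a set" where
  "derived r 0 = Field r"
| "derived r (Suc e) = {x \<in> Field r. \<forall>y. rless r y x \<longrightarrow> (\<exists>z. rless r y z \<and> rless r z x \<and> z \<in> derived r e)}"

declare derived.simps(2)[simp del]

definition cofinal :: "'a rel \<Rightarrow> 'a set \<Rightarrow> bool" where
  "cofinal r S \<longleftrightarrow> (\<forall>w\<in>Field r. \<exists>z. rless r w z \<and> z \<in> S)"

lemma rless_Field: "rless r x y \<Longrightarrow> x \<in> Field r \<and> y \<in> Field r"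
  by (auto simp: rless_def intro: FieldI1 FieldI2)

lemma derived_subset_Field: "derived r e \<subseteq> Field r"
  by (cases e) (auto simp: derived.simps)

lemma derived_in_Field: "x \<in> derived r e \<Longrightarrow> x \<in> Field r"
  by (rule subsetD[OF derived_subset_Field])

lemma derived_SucD:
  "x \<in> derived r (Suc e) \<Longrightarrow> rless r y x \<Longrightarrow> \<exists>z. rless r y z \<and> rless r z x \<and> z \<in> derived r e"
  by (auto simp: derived.simps)

lemma derived_SucI:
  "x \<in> Field r \<Longrightarrow> (\<And>y. rless r y x \<Longrightarrow> \<exists>z. rless r y z \<and> rless r z x \<and> z \<in> derived r e) \<Longrightarrow>
    x \<in> derived r (Suc e)"
  by (auto simp: derived.simps)

lemma not_derived_Suc_if_covered:
  "rless r y x \<Longrightarrow> (\<And>z. \<not> (rless r y z \<and> rless r z x)) \<Longrightarrow> x \<notin> derived r (Suc e)"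
  by (meson derived_SucD)

text \<open>Membership in a derived set only depends on the points below, so it is preserved
  by isomorphisms between downward closed parts of two orders.\<close>
lemma derived_transfer:
  assumes A: "A \<subseteq> Field r" "\<And>x y. x \<in> A \<Longrightarrow> rless r y x \<Longrightarrow> y \<in> A"
    and B: "B \<subseteq> Field s" "\<And>x y. x \<in> B \<Longrightarrow> rless s y x \<Longrightarrow> y \<in> B"
    and bij: "bij_betw h A B"
    and ord: "\<forall>x\<in>A. \<forall>y\<in>A. (x, y) \<in> r \<longleftrightarrow> (h x, h y) \<in> s"
  shows "x \<in> A \<Longrightarrow> x \<in> derived r e \<longleftrightarrow> h x \<in> derived s e"
proof (induction e arbitrary: x)
  case 0
  then show ?case using A(1) B(1) bij by (auto simp: bij_betw_def)
next
  case (Suc e)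
  have rless_iff: "rless r a b \<longleftrightarrow> rless s (h a) (h b)" if "a \<in> A" "b \<in> A" for a b
    using that ord bij unfolding rless_def bij_betw_def inj_on_def by metis
  have hx: "h x \<in> B" using Suc.prems bij by (auto simp: bij_betw_def)
  show ?case
  proof
    assume x: "x \<in> derived r (Suc e)"
    show "h x \<in> derived s (Suc e)"
    proof (rule derived_SucI)
      show "h x \<in> Field s" using hx B(1) by blast
    next
      fix y' assume y'x: "rless s y' (h x)"
      then obtain y where y: "y \<in> A" "y' = h y" using B(2)[OF hx] bij by (auto simp: bij_betw_def)
      have "rless r y x" using rless_iff[OF y(1) Suc.prems] y'x y by simp
      then obtain z where z: "rless r y z" "rless r z x" "z \<in> derived r e" using derived_SucD[OF x] by blast
      have zA: "z \<in> A" using A(2)[OF Suc.prems z(2)] .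
      show "\<exists>z. rless s y' z \<and> rless s z (h x) \<and> z \<in> derived s e"
        using z zA y rless_iff Suc.IH Suc.prems by (intro exI[of _ "h z"]) auto
    qed
  next
    assume hx': "h x \<in> derived s (Suc e)"
    show "x \<in> derived r (Suc e)"
    proof (rule derived_SucI)
      show "x \<in> Field r" using Suc.prems A(1) by blast
    next
      fix y assume yx: "rless r y x"
      have yA: "y \<in> A" using A(2)[OF Suc.prems yx] .
      have "rless s (h y) (h x)" using rless_iff[OF yA Suc.prems] yx by simp
      then obtain z' where z': "rless s (h y) z'" "rless s z' (h x)" "z' \<in> derived s e"
        using derived_SucD[OF hx'] by blast
      obtain z where z: "z \<in> A" "z' = h z" using B(2)[OF hx z'(2)] bij by (auto simp: bij_betw_def)
      show "\<exists>z. rless r y z \<and> rless r z x \<and> z \<in> derived r e"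
        using z z' yA rless_iff Suc.IH Suc.prems by (intro exI[of _ z]) auto
    qed
  qed
qed

lemma derived_ord_iso:
  assumes "bij_betw f (Field r) (Field s)"
    and "\<forall>x\<in>Field r. \<forall>y\<in>Field r. (x, y) \<in> r \<longleftrightarrow> (f x, f y) \<in> s"
    and "x \<in> Field r"
  shows "x \<in> derived r e \<longleftrightarrow> f x \<in> derived s e"
  by (rule derived_transfer[OF order.refl _ order.refl _ assms]) (meson rless_Field)+

lemma rless_ord_iso:
  assumes "bij_betw f (Field r) (Field s)"
    and "\<forall>x\<in>Field r. \<forall>y\<in>Field r. (x, y) \<in> r \<longleftrightarrow> (f x, f y) \<in> s"
    and "a \<in> Field r" "b \<in> Field r"
  shows "rless r a b \<longleftrightarrow> rless s (f a) (f b)"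
proof -
  have "(a, b) \<in> r \<longleftrightarrow> (f a, f b) \<in> s" using assms(2-4) by blast
  moreover have "a \<noteq> b \<longleftrightarrow> f a \<noteq> f b" using assms(1,3,4) unfolding bij_betw_def inj_on_def by blast
  ultimately show ?thesis by (simp add: rless_def)
qed

lemma derived_ord_iso_image:
  assumes bij: "bij_betw f (Field r) (Field s)"
    and ord: "\<forall>x\<in>Field r. \<forall>y\<in>Field r. (x, y) \<in> r \<longleftrightarrow> (f x, f y) \<in> s"
  shows "derived s e = f ` derived r e"
proof
  show "f ` derived r e \<subseteq> derived s e"
  proof
    fix y assume "y \<in> f ` derived r e"
    then obtain z where z: "z \<in> derived r e" "y = f z" by blast
    then show "y \<in> derived s e" using derived_ord_iso[OF bij ord derived_in_Field[OF z(1)]] by simp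
  qed
  show "derived s e \<subseteq> f ` derived r e"
  proof
    fix y assume y: "y \<in> derived s e"
    obtain z where z: "z \<in> Field r" "y = f z"
      using derived_in_Field[OF y] bij unfolding bij_betw_def by blast
    then have "z \<in> derived r e" using y derived_ord_iso[OF bij ord z(1)] by simp
    then show "y \<in> f ` derived r e" using z(2) by blast
  qed
qed

lemma derived_initial_segment:
  assumes "trans r" "trans s"
    and "bij_betw h {u. (u, w) \<in> r} {u. (u, h w) \<in> s}"
    and "\<forall>x\<in>{u. (u, w) \<in> r}. \<forall>y\<in>{u. (u, w) \<in> r}. (x, y) \<in> r \<longleftrightarrow> (h x, h y) \<in> s"
    and "(u, w) \<in> r"
  shows "u \<in> derived r e \<longleftrightarrow> h u \<in> derived s e"
proof (rule derived_transfer[OF _ _ _ _ assms(3,4)])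
  show "{u. (u, w) \<in> r} \<subseteq> Field r" "{u. (u, h w) \<in> s} \<subseteq> Field s"
    by (auto intro: FieldI1)
  show "y \<in> {u. (u, w) \<in> r}" if "x \<in> {u. (u, w) \<in> r}" "rless r y x" for x y
    using that assms(1) unfolding trans_def rless_def by blast
  show "y \<in> {u. (u, h w) \<in> s}" if "x \<in> {u. (u, h w) \<in> s}" "rless s y x" for x y
    using that assms(2) unfolding trans_def rless_def by blast
  show "u \<in> {u. (u, w) \<in> r}"
    using assms(5) by simp
qed

section \<open>Ordered sums\<close>

lemma in_osum: "((i, x), (j, y)) \<in> osum R M \<longleftrightarrow> i \<in> Field R \<and> j \<in> Field R \<and>
      x \<in> Field (M i) \<and> y \<in> Field (M j) \<and>
      ((i \<noteq> j \<and> (i, j) \<in> R) \<or> (i = j \<and> (x, y) \<in> M i))"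
  by (simp add: osum_def)

lemma rless_osum: "rless (osum R M) (i, x) (j, y) \<longleftrightarrow> i \<in> Field R \<and> j \<in> Field R \<and>
      x \<in> Field (M i) \<and> y \<in> Field (M j) \<and>
      ((i \<noteq> j \<and> (i, j) \<in> R) \<or> (i = j \<and> rless (M i) x y))"
  by (auto simp: rless_def osum_def)

lemma Field_osum: "Field (osum R M) = {(i, x). i \<in> Field R \<and> x \<in> Field (M i)}"
proof
  show "Field (osum R M) \<subseteq> {(i, x). i \<in> Field R \<and> x \<in> Field (M i)}"
    by (auto simp: Field_def osum_def)
next
  show "{(i, x). i \<in> Field R \<and> x \<in> Field (M i)} \<subseteq> Field (osum R M)"
  proof clarify
    fix i x assume a: "i \<in> Field R" "x \<in> Field (M i)"
    then obtain y where "(x, y) \<in> M i \<or> (y, x) \<in> M i" by (auto simp: Field_def)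
    then have "((i, x), (i, y)) \<in> osum R M \<or> ((i, y), (i, x)) \<in> osum R M"
      using a by (auto simp: osum_def intro: FieldI1 FieldI2)
    then show "(i, x) \<in> Field (osum R M)" by (auto intro: FieldI1 FieldI2)
  qed
qed

lemma derived_osum_non_least:
  assumes "antisym R" and "i \<in> Field R" and "rless (M i) x0 x"
  shows "(i, x) \<in> derived (osum R M) e \<longleftrightarrow> x \<in> derived (M i) e"
  using assms(3)
proof (induction e arbitrary: x0 x)
  case 0
  then show ?case using rless_Field[OF 0] assms(2) by (simp add: Field_osum)
next
  case (Suc e)
  have xF: "x \<in> Field (M i)" "x0 \<in> Field (M i)" using rless_Field[OF Suc.prems] by auto
  have same_summand: "l = i" if "rless (osum R M) (i, y) (l, z)" "rless (osum R M) (l, z) (i, x)" for y l z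
    using that assms(1) by (auto simp: rless_osum dest: antisymD)
  show ?case
  proof
    assume A: "(i, x) \<in> derived (osum R M) (Suc e)"
    show "x \<in> derived (M i) (Suc e)"
    proof (rule derived_SucI[OF xF(1)])
      fix y assume yx: "rless (M i) y x"
      have "rless (osum R M) (i, y) (i, x)" using yx assms(2) rless_Field[OF yx] by (simp add: rless_osum)
      then obtain l z where z: "rless (osum R M) (i, y) (l, z)" "rless (osum R M) (l, z) (i, x)"
          "(l, z) \<in> derived (osum R M) e"
        using derived_SucD[OF A] by fast
      have "l = i" using same_summand[OF z(1,2)] .
      then have "rless (M i) y z" "rless (M i) z x" using z by (auto simp: rless_osum)
      then show "\<exists>z. rless (M i) y z \<and> rless (M i) z x \<and> z \<in> derived (M i) e"
        using Suc.IH[of y z] z \<open>l = i\<close> by auto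
    qed
  next
    assume A: "x \<in> derived (M i) (Suc e)"
    show "(i, x) \<in> derived (osum R M) (Suc e)"
    proof (rule derived_SucI)
      show "(i, x) \<in> Field (osum R M)" using xF assms(2) by (simp add: Field_osum)
    next
      fix y' assume y'x: "rless (osum R M) y' (i, x)"
      obtain l y where y': "y' = (l, y)" by (cases y')
      show "\<exists>z. rless (osum R M) y' z \<and> rless (osum R M) z (i, x) \<and> z \<in> derived (osum R M) e"
      proof (cases "l = i")
        case True
        then have "rless (M i) y x" using y'x y' by (simp add: rless_osum)
        then obtain z where z: "rless (M i) y z" "rless (M i) z x" "z \<in> derived (M i) e"
          using derived_SucD[OF A] by blast
        show ?thesis using z Suc.IH[of y z] assms(2) True y' rless_Field[OF z(1)] xF
          by (intro exI[of _ "(i, z)"]) (auto simp: rless_osum)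
      next
        case False
        obtain z where z: "rless (M i) x0 z" "rless (M i) z x" "z \<in> derived (M i) e"
          using derived_SucD[OF A] Suc.prems by blast
        show ?thesis using z Suc.IH[of x0 z] assms(2) False y'x y' rless_Field[OF z(1)]
          by (intro exI[of _ "(i, z)"]) (auto simp: rless_osum)
      qed
    qed
  qed
qed

lemma derived_osum_summand:
  assumes "antisym R" "j \<in> Field R"
    and no_least: "\<forall>v\<in>Field (M j). \<exists>v0. rless (M j) v0 v"
    and v: "v \<in> Field (M j)"
  shows "(j, v) \<in> derived (osum R M) e \<longleftrightarrow> v \<in> derived (M j) e"
proof -
  obtain v0 where "rless (M j) v0 v" using no_least v by blast
  then show ?thesis by (rule derived_osum_non_least[OF assms(1,2)])
qed

lemma derived_Suc_osum_least:
  assumes R: "antisym R" "total_on (Field R) R"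
    and i: "i \<in> Field R" and i'i: "(i', i) \<in> R" "i' \<noteq> i"
    and adjacent: "\<forall>l. (i', l) \<in> R \<longrightarrow> (l, i) \<in> R \<longrightarrow> l = i' \<or> l = i"
    and x: "x \<in> Field (M i)" "\<forall>y. \<not> rless (M i) y x"
    and nonempty: "Field (M i') \<noteq> {}"
  shows "(i, x) \<in> derived (osum R M) (Suc e) \<longleftrightarrow> cofinal (M i') (derived (M i') e)"
proof -
  have i': "i' \<in> Field R" using i'i by (auto intro: FieldI1)
  have derived_i': "(i', z) \<in> derived (osum R M) e \<longleftrightarrow> z \<in> derived (M i') e"
    if "rless (M i') w z" for w z
    using derived_osum_non_least[OF R(1) i', of M w z] that by blast
  show ?thesis
  proof
    assume A: "(i, x) \<in> derived (osum R M) (Suc e)"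
    show "cofinal (M i') (derived (M i') e)"
      unfolding cofinal_def
    proof
      fix w assume w: "w \<in> Field (M i')"
      have "rless (osum R M) (i', w) (i, x)" using w x i i' i'i by (simp add: rless_osum)
      then obtain l z where z: "rless (osum R M) (i', w) (l, z)" "rless (osum R M) (l, z) (i, x)"
          "(l, z) \<in> derived (osum R M) e"
        using derived_SucD[OF A] by fast
      have "l \<noteq> i" using z(2) x(2) by (auto simp: rless_osum)
      then have "l = i'" using z adjacent by (auto simp: rless_osum)
      then have "rless (M i') w z" using z by (auto simp: rless_osum)
      then show "\<exists>z. rless (M i') w z \<and> z \<in> derived (M i') e"
        using derived_i' z \<open>l = i'\<close> by auto
    qed
  next
    assume C: "cofinal (M i') (derived (M i') e)"
    show "(i, x) \<in> derived (osum R M) (Suc e)"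
    proof (rule derived_SucI)
      show "(i, x) \<in> Field (osum R M)" using x i by (simp add: Field_osum)
    next
      fix y' assume y'x: "rless (osum R M) y' (i, x)"
      obtain l y where y': "y' = (l, y)" by (cases y')
      have l: "l \<noteq> i" "(l, i) \<in> R" "l \<in> Field R" "y \<in> Field (M l)"
        using y'x y' x(2) by (auto simp: rless_osum)
      show "\<exists>z. rless (osum R M) y' z \<and> rless (osum R M) z (i, x) \<and> z \<in> derived (osum R M) e"
      proof (cases "l = i'")
        case True
        then obtain z where z: "rless (M i') y z" "z \<in> derived (M i') e"
          using C l unfolding cofinal_def by auto
        show ?thesis using z True l y' rless_Field[OF z(1)] x i i' i'i derived_i'[OF z(1)]
          by (intro exI[of _ "(i', z)"]) (auto simp: rless_osum)
      next
        case False
        have "(l, i') \<in> R" using R(2) l i' adjacent False unfolding total_on_def by blast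
        obtain w where "w \<in> Field (M i')" using nonempty by auto
        then obtain z where z: "rless (M i') w z" "z \<in> derived (M i') e"
          using C unfolding cofinal_def by auto
        show ?thesis using z False l y' rless_Field[OF z(1)] x i i' i'i \<open>(l, i') \<in> R\<close> derived_i'[OF z(1)]
          by (intro exI[of _ "(i', z)"]) (auto simp: rless_osum)
      qed
    qed
  qed
qed

lemma cofinal_derived_osum_greatest:
  assumes R: "antisym R" and j: "j \<in> Field R" "\<forall>i\<in>Field R. (i, j) \<in> R"
    and nonempty: "Field (M j) \<noteq> {}"
  shows "cofinal (osum R M) (derived (osum R M) e) \<longleftrightarrow> cofinal (M j) (derived (M j) e)"
proof -
  have derived_j: "(j, z) \<in> derived (osum R M) e \<longleftrightarrow> z \<in> derived (M j) e"
    if "rless (M j) w z" for w z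
    using derived_osum_non_least[OF R j(1), of M w z] that by blast
  show ?thesis
  proof
    assume C: "cofinal (osum R M) (derived (osum R M) e)"
    show "cofinal (M j) (derived (M j) e)" unfolding cofinal_def
    proof
      fix w assume "w \<in> Field (M j)"
      then have "(j, w) \<in> Field (osum R M)" using j by (simp add: Field_osum)
      then obtain l z where z: "rless (osum R M) (j, w) (l, z)" "(l, z) \<in> derived (osum R M) e"
        using C unfolding cofinal_def by fast
      have "l = j" using z R j(2) by (auto simp: rless_osum dest: antisymD)
      then have "rless (M j) w z" using z by (simp add: rless_osum)
      then show "\<exists>z. rless (M j) w z \<and> z \<in> derived (M j) e"
        using derived_j z \<open>l = j\<close> by auto
    qed
  next
    assume C: "cofinal (M j) (derived (M j) e)"
    show "cofinal (osum R M) (derived (osum R M) e)" unfolding cofinal_def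
    proof
      fix w' assume "w' \<in> Field (osum R M)"
      then obtain i x where w': "w' = (i, x)" "i \<in> Field R" "x \<in> Field (M i)"
        by (auto simp: Field_osum)
      obtain x0 where x0: "x0 \<in> Field (M j)" "i = j \<Longrightarrow> x0 = x"
        using nonempty w' by blast
      then obtain z where z: "rless (M j) x0 z" "z \<in> derived (M j) e"
        using C unfolding cofinal_def by auto
      then show "\<exists>z. rless (osum R M) w' z \<and> z \<in> derived (osum R M) e"
        using w' x0 rless_Field[OF z(1)] derived_j[OF z(1)] j
        by (intro exI[of _ "(j, z)"]) (auto simp: rless_osum)
    qed
  qed
qed

lemma in_oplus [simp]:
  "(Inl x, Inl y) \<in> oplus r s \<longleftrightarrow> (x, y) \<in> r"
  "(Inr u, Inr v) \<in> oplus r s \<longleftrightarrow> (u, v) \<in> s"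
  "(Inl x, Inr v) \<in> oplus r s \<longleftrightarrow> x \<in> Field r \<and> v \<in> Field s"
  "(Inr u, Inl y) \<notin> oplus r s"
  by (auto simp: oplus_def)

lemma rless_oplus [simp]:
  "rless (oplus r s) (Inl x) (Inl y) \<longleftrightarrow> rless r x y"
  "rless (oplus r s) (Inr u) (Inr v) \<longleftrightarrow> rless s u v"
  "rless (oplus r s) (Inl x) (Inr v) \<longleftrightarrow> x \<in> Field r \<and> v \<in> Field s"
  "\<not> rless (oplus r s) (Inr u) (Inl y)"
  by (auto simp: rless_def)

lemma Field_oplus: "Field (oplus r s) = Inl ` Field r \<union> Inr ` Field s"
proof
  show "Field (oplus r s) \<subseteq> Inl ` Field r \<union> Inr ` Field s"
    by (auto simp: Field_def oplus_def)
  have "Inl x \<in> Field (oplus r s)" if x: "x \<in> Field r" for x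
  proof -
    obtain y where "(x, y) \<in> r \<or> (y, x) \<in> r" using x unfolding Field_def by blast
    then show ?thesis by (meson FieldI1 FieldI2 in_oplus(1))
  qed
  moreover have "Inr y \<in> Field (oplus r s)" if y: "y \<in> Field s" for y
  proof -
    obtain x where "(y, x) \<in> s \<or> (x, y) \<in> s" using y unfolding Field_def by blast
    then show ?thesis by (meson FieldI1 FieldI2 in_oplus(2))
  qed
  ultimately show "Inl ` Field r \<union> Inr ` Field s \<subseteq> Field (oplus r s)" by blast
qed

lemma Inl_Field_oplus [simp]: "Inl x \<in> Field (oplus r s) \<longleftrightarrow> x \<in> Field r"
  and Inr_Field_oplus [simp]: "Inr y \<in> Field (oplus r s) \<longleftrightarrow> y \<in> Field s"
  by (auto simp: Field_oplus)

lemma derived_oplus_Inl: "x \<in> Field r \<Longrightarrow> Inl x \<in> derived (oplus r s) e \<longleftrightarrow> x \<in> derived r e"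
proof (induction e arbitrary: x)
  case 0 then show ?case by simp
next
  case (Suc e)
  have between: "(\<exists>z'. rless (oplus r s) (Inl y) z' \<and> rless (oplus r s) z' (Inl x) \<and> z' \<in> derived (oplus r s) e)
     \<longleftrightarrow> (\<exists>z. rless r y z \<and> rless r z x \<and> z \<in> derived r e)" for y
  proof
    assume "\<exists>z'. rless (oplus r s) (Inl y) z' \<and> rless (oplus r s) z' (Inl x) \<and> z' \<in> derived (oplus r s) e"
    then obtain z' where z: "rless (oplus r s) (Inl y) z'" "rless (oplus r s) z' (Inl x)"
        "z' \<in> derived (oplus r s) e" by blast
    then obtain z where "z' = Inl z" by (cases z') auto
    then show "\<exists>z. rless r y z \<and> rless r z x \<and> z \<in> derived r e" using z Suc.IH rless_Field by fastforce
  next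
    assume "\<exists>z. rless r y z \<and> rless r z x \<and> z \<in> derived r e"
    then obtain z where z: "rless r y z" "rless r z x" "z \<in> derived r e" by blast
    then show "\<exists>z'. rless (oplus r s) (Inl y) z' \<and> rless (oplus r s) z' (Inl x) \<and> z' \<in> derived (oplus r s) e"
      using Suc.IH rless_Field by (intro exI[of _ "Inl z"]) fastforce
  qed
  have below: "(\<forall>y'. rless (oplus r s) y' (Inl x) \<longrightarrow> P y') \<longleftrightarrow> (\<forall>y. rless r y x \<longrightarrow> P (Inl y))" for P
    by (metis rless_oplus(1,4) sum.exhaust)
  show ?case using Suc.prems by (simp only: derived.simps mem_Collect_eq Inl_Field_oplus below between)
qed

lemma derived_oplus_Inr:
  assumes "rless s y0 y"
  shows "Inr y \<in> derived (oplus r s) e \<longleftrightarrow> y \<in> derived s e"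
  using assms
proof (induction e arbitrary: y0 y)
  case 0 then show ?case using rless_Field by fastforce
next
  case (Suc e)
  have yF: "y \<in> Field s" using rless_Field[OF Suc.prems] by simp
  show ?case
  proof
    assume A: "Inr y \<in> derived (oplus r s) (Suc e)"
    show "y \<in> derived s (Suc e)"
    proof (rule derived_SucI[OF yF])
      fix u assume "rless s u y"
      then have "rless (oplus r s) (Inr u) (Inr y)" by simp
      then obtain z' where z: "rless (oplus r s) (Inr u) z'" "rless (oplus r s) z' (Inr y)"
          "z' \<in> derived (oplus r s) e"
        using derived_SucD[OF A] by blast
      then obtain z where "z' = Inr z" by (cases z') auto
      then show "\<exists>z. rless s u z \<and> rless s z y \<and> z \<in> derived s e" using z Suc.IH[of u z] by auto
    qed
  next
    assume A: "y \<in> derived s (Suc e)"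
    show "Inr y \<in> derived (oplus r s) (Suc e)"
    proof (rule derived_SucI)
      show "Inr y \<in> Field (oplus r s)" using yF by simp
    next
      fix y' assume y'y: "rless (oplus r s) y' (Inr y)"
      show "\<exists>z. rless (oplus r s) y' z \<and> rless (oplus r s) z (Inr y) \<and> z \<in> derived (oplus r s) e"
      proof (cases y')
        case (Inl u)
        obtain z where z: "rless s y0 z" "rless s z y" "z \<in> derived s e"
          using derived_SucD[OF A] Suc.prems by blast
        then show ?thesis using Inl y'y Suc.IH[of y0 z] rless_Field[OF z(1)]
          by (intro exI[of _ "Inr z"]) auto
      next
        case (Inr u)
        then have "rless s u y" using y'y by simp
        then obtain z where z: "rless s u z" "rless s z y" "z \<in> derived s e"
          using derived_SucD[OF A] by blast
        then show ?thesis using Inr Suc.IH[of u z] by (intro exI[of _ "Inr z"]) auto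
      qed
    qed
  qed
qed

lemma derived_Suc_oplus_least:
  assumes y: "y \<in> Field s" "\<forall>u. \<not> rless s u y" and nonempty: "Field r \<noteq> {}"
  shows "Inr y \<in> derived (oplus r s) (Suc e) \<longleftrightarrow> cofinal r (derived r e)"
proof
  assume A: "Inr y \<in> derived (oplus r s) (Suc e)"
  show "cofinal r (derived r e)" unfolding cofinal_def
  proof
    fix w assume "w \<in> Field r"
    then have "rless (oplus r s) (Inl w) (Inr y)" using y by simp
    then obtain z' where z: "rless (oplus r s) (Inl w) z'" "rless (oplus r s) z' (Inr y)"
        "z' \<in> derived (oplus r s) e"
      using derived_SucD[OF A] by blast
    have "\<not> (\<exists>u. z' = Inr u)" using z(2) y(2) by auto
    then obtain z where "z' = Inl z" by (cases z') auto
    then show "\<exists>z. rless r w z \<and> z \<in> derived r e" using z derived_oplus_Inl rless_Field by fastforce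
  qed
next
  assume C: "cofinal r (derived r e)"
  show "Inr y \<in> derived (oplus r s) (Suc e)"
  proof (rule derived_SucI)
    show "Inr y \<in> Field (oplus r s)" using y by simp
  next
    fix y' assume "rless (oplus r s) y' (Inr y)"
    then obtain u where u: "y' = Inl u" "u \<in> Field r" using y(2) by (cases y') auto
    then obtain z where z: "rless r u z" "z \<in> derived r e" using C unfolding cofinal_def by auto
    then show "\<exists>z. rless (oplus r s) y' z \<and> rless (oplus r s) z (Inr y) \<and> z \<in> derived (oplus r s) e"
      using u y derived_oplus_Inl rless_Field by (intro exI[of _ "Inl z"]) fastforce
  qed
qed

section \<open>The ordinals omega^m\<close>

abbreviation zeros :: "nat \<Rightarrow> nat list" where "zeros n \<equiv> replicate n 0"

abbreviation less_nat_rel :: "nat rel" where "less_nat_rel \<equiv> {(a, b). a < b}"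

text \<open>The derived rank of a nonzero point of omega^m is the exponent of its last Cantor
  normal form term, i.e. the number of trailing zero digits.\<close>
definition trailing_zeros :: "nat list \<Rightarrow> nat" where
  "trailing_zeros xs = length (takeWhile (\<lambda>x. x = 0) (rev xs))"

lemma all_zero_iff_zeros: "(\<forall>x\<in>set xs. x = 0) \<longleftrightarrow> xs = zeros (length xs)"
  by (induction xs) auto

lemma trailing_zeros_zeros [simp]: "trailing_zeros (zeros n) = n"
  by (simp add: trailing_zeros_def)

lemma trailing_zeros_Cons: "xs \<noteq> zeros (length xs) \<Longrightarrow> trailing_zeros (v # xs) = trailing_zeros xs"
  using all_zero_iff_zeros[of xs] by (auto simp: trailing_zeros_def takeWhile_append)

lemma trailing_zeros_Cons_zeros: "v \<noteq> 0 \<Longrightarrow> trailing_zeros (v # zeros n) = n"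
  by (simp add: trailing_zeros_def takeWhile_append)

lemma trailing_zeros_less_length:
  assumes "xs \<noteq> zeros (length xs)"
  shows "trailing_zeros xs < length xs"
proof -
  have "length (takeWhile P ys) < length ys" if "\<not> (\<forall>y\<in>set ys. P y)" for P and ys :: "nat list"
    using that by (induction ys) simp_all
  moreover have "\<not> (\<forall>y\<in>set (rev xs). y = 0)"
    unfolding set_rev all_zero_iff_zeros by (rule assms)
  ultimately have "length (takeWhile (\<lambda>x. x = 0) (rev xs)) < length (rev xs)" .
  then show ?thesis by (simp add: trailing_zeros_def)
qed

lemma lex_less_nat_irrefl [simp]: "(xs, xs) \<notin> lex less_nat_rel"
  by (simp add: irrefl_def)

lemma in_omega_pow: "(xs, ys) \<in> omega_pow m \<longleftrightarrow> length xs = m \<and> length ys = m \<and>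
    (xs = ys \<or> (xs, ys) \<in> lex less_nat_rel)"
  by (auto simp: omega_pow_def lenlex_conv)

lemma rless_omega_pow:
  "rless (omega_pow m) xs ys \<longleftrightarrow> length xs = m \<and> length ys = m \<and> (xs, ys) \<in> lex less_nat_rel"
  by (auto simp: rless_def in_omega_pow)

lemma Field_omega_pow: "Field (omega_pow m) = {xs. length xs = m}"
  by (auto simp: Field_def in_omega_pow)

lemma Field_omega_pow_nonempty: "Field (omega_pow m) \<noteq> {}"
  using Ex_list_of_length by (auto simp: Field_omega_pow)

lemma trans_omega_pow: "trans (omega_pow m)"
proof -
  have "trans (lex less_nat_rel)" by (rule lex_transI) (auto simp: trans_def)
  then show ?thesis unfolding trans_def in_omega_pow by blast
qed

lemma omega_pow_zeros_least: "\<not> rless (omega_pow m) xs (zeros m)"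
proof -
  have "(xs, zeros n) \<notin> lex less_nat_rel" for n
    by (induction n arbitrary: xs) (auto simp: neq_Nil_conv, case_tac xs, auto)
  then show ?thesis by (simp add: rless_omega_pow)
qed

lemma omega_pow_zeros_less: "length xs = m \<Longrightarrow> xs \<noteq> zeros m \<Longrightarrow> rless (omega_pow m) (zeros m) xs"
proof (induction m arbitrary: xs)
  case 0 then show ?case by simp
next
  case (Suc m)
  then obtain v ys where xs: "xs = v # ys" "length ys = m" by (cases xs) auto
  show ?case
  proof (cases "v = 0")
    case True
    then show ?thesis using Suc.IH[of ys] Suc.prems xs by (simp add: rless_omega_pow)
  next
    case False then show ?thesis using xs by (simp add: rless_omega_pow)
  qed
qed

lemma Field_nat_le [simp]: "Field {(x, y). x \<le> (y::nat)} = UNIV"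
  by (auto simp: Field_def)

text \<open>omega^(m+1) is the omega-sum of copies of omega^m: split off the leading digit.\<close>
lemma omega_pow_Suc_iso:
  fixes m :: nat
  defines "S \<equiv> osum {(i, j). i \<le> (j::nat)} (\<lambda>_. omega_pow m)"
  shows "bij_betw (\<lambda>(v, xs). v # xs) (Field S) (Field (omega_pow (Suc m)))"
    and "\<forall>x\<in>Field S. \<forall>y\<in>Field S. (x, y) \<in> S \<longleftrightarrow>
      ((\<lambda>(v, xs). v # xs) x, (\<lambda>(v, xs). v # xs) y) \<in> omega_pow (Suc m)"
   apply (simp add: S_def bij_betw_def inj_on_def)
   apply (auto simp: Field_osum Field_omega_pow length_Suc_conv image_iff)[1]
  by (auto simp: S_def Field_osum Field_omega_pow in_osum in_omega_pow)

lemma cofinal_derived_omega_pow_if_rank: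
  assumes rank: "\<And>xs e. length xs = m \<Longrightarrow> xs \<noteq> zeros m \<Longrightarrow>
      xs \<in> derived (omega_pow m) e \<longleftrightarrow> e \<le> trailing_zeros xs"
    and "0 < m"
  shows "cofinal (omega_pow m) (derived (omega_pow m) e) \<longleftrightarrow> e < m"
proof
  assume "cofinal (omega_pow m) (derived (omega_pow m) e)"
  moreover have "zeros m \<in> Field (omega_pow m)" by (simp add: Field_omega_pow)
  ultimately obtain z where z: "rless (omega_pow m) (zeros m) z" "z \<in> derived (omega_pow m) e"
    unfolding cofinal_def by blast
  then have "length z = m" "z \<noteq> zeros m" by (auto simp: rless_def in_omega_pow)
  then show "e < m" using rank z(2) trailing_zeros_less_length[of z] by fastforce
next
  assume e: "e < m"
  obtain m' where m: "m = Suc m'" using \<open>0 < m\<close> gr0_implies_Suc by blast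
  show "cofinal (omega_pow m) (derived (omega_pow m) e)" unfolding cofinal_def
  proof
    fix w assume "w \<in> Field (omega_pow m)"
    then obtain h t where w: "w = h # t" "length t = m'" by (auto simp: Field_omega_pow m length_Suc_conv)
    let ?z = "Suc h # zeros m'"
    have "rless (omega_pow m) w ?z" using w m by (simp add: rless_omega_pow)
    moreover have "?z \<in> derived (omega_pow m) e"
      using rank[of ?z e] e m trailing_zeros_Cons_zeros[of "Suc h" m'] by simp
    ultimately show "\<exists>z. rless (omega_pow m) w z \<and> z \<in> derived (omega_pow m) e" by blast
  qed
qed

lemma derived_omega_pow_Suc:
  assumes rank: "\<And>xs e. length xs = m \<Longrightarrow> xs \<noteq> zeros m \<Longrightarrow>
      xs \<in> derived (omega_pow m) e \<longleftrightarrow> e \<le> trailing_zeros xs"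
    and xs: "length xs = Suc m" "xs \<noteq> zeros (Suc m)"
  shows "xs \<in> derived (omega_pow (Suc m)) e \<longleftrightarrow> e \<le> trailing_zeros xs"
proof -
  let ?S = "osum {(i, j). i \<le> (j::nat)} (\<lambda>_. omega_pow m)"
  have R: "antisym {(i, j). i \<le> (j::nat)}" "total_on (Field {(i, j). i \<le> (j::nat)}) {(i, j). i \<le> j}"
    by (auto simp: antisym_def total_on_def)
  obtain v ys where vys: "xs = v # ys" "length ys = m" using xs by (cases xs) auto
  have vF: "(v, ys) \<in> Field ?S" using vys by (simp add: Field_osum Field_omega_pow)
  have iso: "xs \<in> derived (omega_pow (Suc m)) e \<longleftrightarrow> (v, ys) \<in> derived ?S e"
    using derived_ord_iso[OF omega_pow_Suc_iso vF, of e] vys by simp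
  show ?thesis
  proof (cases "ys = zeros m")
    case False
    have "(v, ys) \<in> derived ?S e \<longleftrightarrow> ys \<in> derived (omega_pow m) e"
      using derived_osum_non_least[OF R(1), of v "\<lambda>_. omega_pow m" "zeros m" ys e]
        omega_pow_zeros_less[OF vys(2) False] by simp
    then show ?thesis using iso rank False vys trailing_zeros_Cons[of ys v] by simp
  next
    case True
    then have v0: "v \<noteq> 0" using xs vys by auto
    have tz: "trailing_zeros xs = m" using vys True trailing_zeros_Cons_zeros[OF v0] by simp
    show ?thesis
    proof (cases e)
      case 0 then show ?thesis using iso vF by simp
    next
      case (Suc e')
      show ?thesis
      proof (cases "m = 0")
        case True
        have "rless ?S (v - 1, []) (v, [])" using v0 True by (auto simp: rless_osum Field_omega_pow)
        moreover have "\<not> (rless ?S (v - 1, []) z \<and> rless ?S z (v, []))" for z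
          by (cases z) (auto simp: rless_osum Field_omega_pow rless_omega_pow)
        ultimately have "(v, []) \<notin> derived ?S (Suc e')" by (rule not_derived_Suc_if_covered)
        then show ?thesis using iso Suc tz True vys \<open>ys = zeros m\<close> by simp
      next
        case False
        have "(v, ys) \<in> derived ?S (Suc e') \<longleftrightarrow> cofinal (omega_pow m) (derived (omega_pow m) e')"
        proof (rule derived_Suc_osum_least[OF R])
          show "(v - 1, v) \<in> {(i, j). i \<le> j}" "v - 1 \<noteq> v" using v0 by auto
          show "\<forall>l. (v - 1, l) \<in> {(i, j). i \<le> j} \<longrightarrow> (l, v) \<in> {(i, j). i \<le> j} \<longrightarrow> l = v - 1 \<or> l = v"
            by auto
          show "ys \<in> Field (omega_pow m)" using vys(2) by (simp add: Field_omega_pow)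
          show "\<forall>y. \<not> rless (omega_pow m) y ys" unfolding True by (simp add: omega_pow_zeros_least)
        qed (simp_all add: Field_omega_pow_nonempty)
        moreover have "cofinal (omega_pow m) (derived (omega_pow m) e') \<longleftrightarrow> e' < m"
          using cofinal_derived_omega_pow_if_rank[OF rank] \<open>m \<noteq> 0\<close> by simp
        ultimately show ?thesis using iso Suc tz by (simp add: Suc_le_eq)
      qed
    qed
  qed
qed

lemma derived_omega_pow:
  "length xs = m \<Longrightarrow> xs \<noteq> zeros m \<Longrightarrow> xs \<in> derived (omega_pow m) e \<longleftrightarrow> e \<le> trailing_zeros xs"
proof (induction m arbitrary: xs e)
  case (Suc m)
  show ?case by (rule derived_omega_pow_Suc[OF Suc.IH Suc.prems])
qed simp

lemma cofinal_derived_omega_pow: "0 < m \<Longrightarrow> cofinal (omega_pow m) (derived (omega_pow m) e) \<longleftrightarrow> e < m"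
  by (rule cofinal_derived_omega_pow_if_rank[OF derived_omega_pow])

lemma in_fin_ord [simp]: "(i, j) \<in> fin_ord n \<longleftrightarrow> i \<le> j \<and> j < n"
  by (simp add: fin_ord_def)

lemma Field_fin_ord [simp]: "Field (fin_ord n) = {..<n}"
  by (auto simp: Field_def fin_ord_def)

lemma fin_ord_linear: "antisym (fin_ord n)" "total_on (Field (fin_ord n)) (fin_ord n)"
  by (auto simp: antisym_def total_on_def)

lemma in_omega_star_pos [simp]: "(i, j) \<in> omega_star_pos \<longleftrightarrow> 1 \<le> j \<and> j \<le> i"
  by (simp add: omega_star_pos_def)

lemma Field_omega_star_pos [simp]: "Field omega_star_pos = {k. 1 \<le> k}"
  by (auto simp: Field_def omega_star_pos_def)

lemma omega_star_pos_linear: "antisym omega_star_pos" "total_on (Field omega_star_pos) omega_star_pos"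
  by (auto simp: antisym_def total_on_def)

lemma Field_copies_omega_pow: "Field (copies_omega_pow n m) = {(c, xs). c < n \<and> length xs = m}"
  by (simp add: copies_omega_pow_def Field_osum Field_omega_pow)

lemma rless_copies_omega_pow: "rless (copies_omega_pow n m) (c, xs) (c', ys) \<longleftrightarrow>
    c < n \<and> c' < n \<and> length xs = m \<and> length ys = m \<and>
   ((c \<noteq> c' \<and> c \<le> c') \<or> (c = c' \<and> rless (omega_pow m) xs ys))"
  by (auto simp: copies_omega_pow_def rless_osum Field_omega_pow)

lemma in_copies_omega_pow: "((c, xs), (c', ys)) \<in> copies_omega_pow n m \<longleftrightarrow>
    c < n \<and> c' < n \<and> length xs = m \<and> length ys = m \<and>
   ((c \<noteq> c' \<and> c \<le> c') \<or> (c = c' \<and> (xs, ys) \<in> omega_pow m))"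
  by (auto simp: copies_omega_pow_def in_osum Field_omega_pow)

lemma derived_copies_omega_pow: "c < n \<Longrightarrow> length xs = m \<Longrightarrow> xs \<noteq> zeros m \<Longrightarrow>
    (c, xs) \<in> derived (copies_omega_pow n m) e \<longleftrightarrow> e \<le> trailing_zeros xs"
  unfolding copies_omega_pow_def
  using derived_osum_non_least[OF fin_ord_linear(1), of c n "\<lambda>_. omega_pow m" "zeros m" xs e]
    omega_pow_zeros_less[of xs m] derived_omega_pow[of xs m e]
  by simp

lemma derived_copies_omega_pow_zeros:
  assumes "0 < c" "c < n" "0 < m"
  shows "(c, zeros m) \<in> derived (copies_omega_pow n m) e \<longleftrightarrow> e \<le> m"
proof (cases e)
  case 0
  then show ?thesis using assms by (simp add: Field_copies_omega_pow)
next
  case (Suc e')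
  have "(c, zeros m) \<in> derived (copies_omega_pow n m) (Suc e') \<longleftrightarrow>
      cofinal (omega_pow m) (derived (omega_pow m) e')"
    unfolding copies_omega_pow_def
  proof (rule derived_Suc_osum_least[OF fin_ord_linear])
    show "(c - 1, c) \<in> fin_ord n" "c - 1 \<noteq> c" "c \<in> Field (fin_ord n)" using assms by auto
    show "\<forall>l. (c - 1, l) \<in> fin_ord n \<longrightarrow> (l, c) \<in> fin_ord n \<longrightarrow> l = c - 1 \<or> l = c"
      by auto
    show "zeros m \<in> Field (omega_pow m)" by (simp add: Field_omega_pow)
    show "\<forall>y. \<not> rless (omega_pow m) y (zeros m)" by (simp add: omega_pow_zeros_least)
  qed (simp add: Field_omega_pow_nonempty)
  then show ?thesis using cofinal_derived_omega_pow[OF assms(3)] Suc by (simp add: Suc_le_eq)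
qed

lemma cofinal_derived_copies_omega_pow:
  assumes "0 < n" "0 < m"
  shows "cofinal (copies_omega_pow n m) (derived (copies_omega_pow n m) e) \<longleftrightarrow> e < m"
proof -
  have "cofinal (copies_omega_pow n m) (derived (copies_omega_pow n m) e) \<longleftrightarrow>
      cofinal (omega_pow m) (derived (omega_pow m) e)"
    unfolding copies_omega_pow_def
  proof (rule cofinal_derived_osum_greatest[OF fin_ord_linear(1)])
    show "n - 1 \<in> Field (fin_ord n)" "\<forall>i\<in>Field (fin_ord n). (i, n - 1) \<in> fin_ord n"
      using assms(1) by auto
  qed (rule Field_omega_pow_nonempty)
  then show ?thesis using cofinal_derived_omega_pow[OF assms(2)] by simp
qed

lemma copies_omega_pow_least: "\<not> rless (copies_omega_pow n m) y (0, zeros m)"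
  using omega_pow_zeros_least[of m] by (cases y) (auto simp: rless_copies_omega_pow)

abbreviation blocks :: "nat \<Rightarrow> nat \<Rightarrow> (nat \<times> nat \<times> nat list) rel" where
  "blocks a b \<equiv> osum omega_star_pos (\<lambda>k. copies_omega_pow (a + k) (b + k))"

lemma Field_blocks: "Field (blocks a b) = {(k, c, xs). 1 \<le> k \<and> c < a + k \<and> length xs = b + k}"
  by (auto simp: Field_osum Field_copies_omega_pow)

lemma in_blocks: "((k, q), (k', q')) \<in> blocks a b \<longleftrightarrow> 1 \<le> k \<and> 1 \<le> k' \<and>
    q \<in> Field (copies_omega_pow (a + k) (b + k)) \<and> q' \<in> Field (copies_omega_pow (a + k') (b + k')) \<and>
    ((k \<noteq> k' \<and> k' \<le> k) \<or> (k = k' \<and> (q, q') \<in> copies_omega_pow (a + k) (b + k)))"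
  by (auto simp: in_osum)

lemma derived_blocks_nonzero:
  "1 \<le> k \<Longrightarrow> c < a + k \<Longrightarrow> length xs = b + k \<Longrightarrow> xs \<noteq> zeros (b + k) \<Longrightarrow>
    (k, c, xs) \<in> derived (blocks a b) e \<longleftrightarrow> e \<le> trailing_zeros xs"
  using derived_osum_non_least[OF omega_star_pos_linear(1), of k "\<lambda>k. copies_omega_pow (a + k) (b + k)"
      "(c, zeros (b + k))" "(c, xs)" e]
    omega_pow_zeros_less[of xs "b + k"] derived_copies_omega_pow[of c "a + k" xs "b + k" e]
  by (simp add: rless_copies_omega_pow)

lemma derived_blocks_copy_start:
  "1 \<le> k \<Longrightarrow> 0 < c \<Longrightarrow> c < a + k \<Longrightarrow>
    (k, c, zeros (b + k)) \<in> derived (blocks a b) e \<longleftrightarrow> e \<le> b + k"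
  using derived_osum_non_least[OF omega_star_pos_linear(1), of k "\<lambda>k. copies_omega_pow (a + k) (b + k)"
      "(0, zeros (b + k))" "(c, zeros (b + k))" e]
    derived_copies_omega_pow_zeros[of c "a + k" "b + k" e]
  by (simp add: rless_copies_omega_pow)

lemma derived_blocks_block_start:
  assumes "1 \<le> k"
  shows "(k, 0, zeros (b + k)) \<in> derived (blocks a b) e \<longleftrightarrow> e \<le> b + k + 1"
proof (cases e)
  case 0
  then show ?thesis using assms by (simp add: Field_blocks)
next
  case (Suc e')
  have "(k, 0, zeros (b + k)) \<in> derived (blocks a b) (Suc e') \<longleftrightarrow>
      cofinal (copies_omega_pow (a + (k + 1)) (b + (k + 1)))
        (derived (copies_omega_pow (a + (k + 1)) (b + (k + 1))) e')"
  proof (rule derived_Suc_osum_least[OF omega_star_pos_linear])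
    show "(k + 1, k) \<in> omega_star_pos" "k + 1 \<noteq> k" "k \<in> Field omega_star_pos" using assms by auto
    show "\<forall>l. (k + 1, l) \<in> omega_star_pos \<longrightarrow> (l, k) \<in> omega_star_pos \<longrightarrow> l = k + 1 \<or> l = k"
      by auto
    show "(0, zeros (b + k)) \<in> Field (copies_omega_pow (a + k) (b + k))"
      using assms by (simp add: Field_copies_omega_pow)
    show "\<forall>y. \<not> rless (copies_omega_pow (a + k) (b + k)) y (0, zeros (b + k))"
      using copies_omega_pow_least by blast
    show "Field (copies_omega_pow (a + (k + 1)) (b + (k + 1))) \<noteq> {}"
      using Ex_list_of_length by (auto simp: Field_copies_omega_pow)
  qed
  then show ?thesis
    using cofinal_derived_copies_omega_pow[of "a + (k + 1)" "b + (k + 1)" e'] Suc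
    by (simp add: less_Suc_eq_le)
qed

lemma cofinal_derived_blocks: "cofinal (blocks a b) (derived (blocks a b) e) \<longleftrightarrow> e < b + 1"
proof -
  have "cofinal (blocks a b) (derived (blocks a b) e) \<longleftrightarrow>
      cofinal (copies_omega_pow (a + 1) (b + 1)) (derived (copies_omega_pow (a + 1) (b + 1)) e)"
  proof (rule cofinal_derived_osum_greatest[OF omega_star_pos_linear(1)])
    show "1 \<in> Field omega_star_pos" "\<forall>i\<in>Field omega_star_pos. (i, 1) \<in> omega_star_pos"
      by auto
    show "Field (copies_omega_pow (a + 1) (b + 1)) \<noteq> {}"
      using Ex_list_of_length by (auto simp: Field_copies_omega_pow)
  qed
  then show ?thesis using cofinal_derived_copies_omega_pow[of "a + 1" "b + 1" e] by simp
qed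

section \<open>The ordinal omega^omega\<close>

abbreviation no_leading_zero :: "nat list \<Rightarrow> bool" where
  "no_leading_zero ys \<equiv> ys = [] \<or> hd ys \<noteq> 0"

lemma in_omega_omega: "(xs, ys) \<in> omega_omega \<longleftrightarrow> no_leading_zero xs \<and> no_leading_zero ys \<and>
    (xs = ys \<or> (xs, ys) \<in> lenlex less_nat_rel)"
  by (simp add: omega_omega_def)

lemma Field_omega_omega: "Field omega_omega = {xs. no_leading_zero xs}"
proof
  show "Field omega_omega \<subseteq> {xs. no_leading_zero xs}" by (auto simp: Field_def in_omega_omega)
  show "{xs. no_leading_zero xs} \<subseteq> Field omega_omega"
  proof
    fix x assume "x \<in> {xs. no_leading_zero xs}"
    then have "(x, x) \<in> omega_omega" by (simp add: in_omega_omega)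
    then show "x \<in> Field omega_omega" by (rule FieldI1)
  qed
qed

lemma trans_omega_omega: "trans omega_omega"
proof -
  have "trans (lenlex less_nat_rel)" by (rule lenlex_transI) (auto simp: trans_def)
  then show ?thesis unfolding trans_def in_omega_omega by blast
qed

lemma length_le_if_in_omega_omega: "(zs, zs') \<in> omega_omega \<Longrightarrow> length zs \<le> length zs'"
  by (auto simp: in_omega_omega dest: lenlex_length)

text \<open>Padding with leading zeros embeds the part of omega^omega below a list of length n
  into omega^n.\<close>
definition pad :: "nat \<Rightarrow> nat list \<Rightarrow> nat list" where
  "pad n ys = zeros (n - length ys) @ ys"

lemma length_pad: "length ys \<le> n \<Longrightarrow> length (pad n ys) = n"
  by (simp add: pad_def)

lemma dropWhile_zero_zeros_append: "no_leading_zero ys \<Longrightarrow> dropWhile (\<lambda>x. x = 0) (zeros k @ ys) = ys"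
  by (induction k) (cases ys; auto)+

lemma dropWhile_zero_pad: "no_leading_zero ys \<Longrightarrow> dropWhile (\<lambda>x. x = 0) (pad n ys) = ys"
  unfolding pad_def by (rule dropWhile_zero_zeros_append)

lemma pad_dropWhile_zero: "pad (length xs) (dropWhile (\<lambda>x. x = 0) xs) = xs"
proof (induction xs)
  case Nil then show ?case by (simp add: pad_def)
next
  case (Cons x xs)
  have "length (dropWhile (\<lambda>x. x = 0) xs) \<le> length xs" by (rule length_dropWhile_le)
  then show ?case using Cons by (cases "x = 0") (simp_all add: pad_def Suc_diff_le)
qed

lemma pad_inj: "no_leading_zero ys \<Longrightarrow> no_leading_zero ys' \<Longrightarrow> pad n ys = pad n ys' \<Longrightarrow> ys = ys'"
  by (metis dropWhile_zero_pad)

lemma pad_lex_less: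
  assumes "no_leading_zero ys'" "length ys < length ys'" "length ys' \<le> n"
  shows "(pad n ys, pad n ys') \<in> lex less_nat_rel" "(pad n ys', pad n ys) \<notin> lex less_nat_rel"
proof -
  obtain h t where ys': "ys' = h # t" "h \<noteq> 0" using assms by (cases ys') auto
  obtain d where d: "length ys' = Suc (length ys + d)" using less_imp_Suc_add[OF assms(2)] by blast
  have e: "n - length ys = (n - length ys') + Suc d" using d assms(3) by linarith
  have p1: "pad n ys = zeros (n - length ys') @ (0 # (zeros d @ ys))"
    unfolding pad_def e replicate_add by simp
  have p2: "pad n ys' = zeros (n - length ys') @ (h # t)" using ys' by (simp add: pad_def)
  have len: "length (zeros d @ ys) = length t" using d ys' by simp
  show "(pad n ys, pad n ys') \<in> lex less_nat_rel"
    unfolding p1 p2 by (rule lex_append_leftI) (use ys' len in simp)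
  show "(pad n ys', pad n ys) \<notin> lex less_nat_rel"
    unfolding p1 p2 using lex_append_left_iff[of less_nat_rel] ys' by simp
qed

lemma in_omega_omega_iff_pad:
  assumes "no_leading_zero ys" "no_leading_zero ys'" "length ys \<le> n" "length ys' \<le> n"
  shows "(ys, ys') \<in> omega_omega \<longleftrightarrow> (pad n ys, pad n ys') \<in> omega_pow n"
proof -
  have "(pad n ys, pad n ys') \<in> lex less_nat_rel \<longleftrightarrow> (ys, ys') \<in> lenlex less_nat_rel"
  proof (cases "length ys = length ys'")
    case True
    then show ?thesis using lex_append_left_iff[of less_nat_rel "zeros (n - length ys)" ys ys']
      by (simp add: pad_def lenlex_conv)
  next
    case False
    then consider "length ys < length ys'" | "length ys' < length ys" by linarith
    then show ?thesis
    proof cases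
      case 1 then show ?thesis using pad_lex_less[of ys' ys n] assms by (simp add: lenlex_conv)
    next
      case 2 then show ?thesis using pad_lex_less[of ys ys' n] assms by (auto simp: lenlex_conv)
    qed
  qed
  then show ?thesis using pad_inj[of ys ys' n] assms by (auto simp: in_omega_omega in_omega_pow length_pad)
qed

lemma omega_omega_initial_segment_iso:
  assumes zs: "no_leading_zero zs"
  defines "n \<equiv> length zs"
  shows "bij_betw (pad n) {u. (u, zs) \<in> omega_omega} {u. (u, pad n zs) \<in> omega_pow n}"
    and "\<forall>x\<in>{u. (u, zs) \<in> omega_omega}. \<forall>y\<in>{u. (u, zs) \<in> omega_omega}.
       (x, y) \<in> omega_omega \<longleftrightarrow> (pad n x, pad n y) \<in> omega_pow n"
proof -
  have below: "no_leading_zero u \<and> length u \<le> n" if "(u, zs) \<in> omega_omega" for u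
    using that length_le_if_in_omega_omega[OF that] by (simp add: n_def in_omega_omega)
  have pad_iff: "(x, y) \<in> omega_omega \<longleftrightarrow> (pad n x, pad n y) \<in> omega_pow n"
    if "(x, zs) \<in> omega_omega" "(y, zs) \<in> omega_omega" for x y
    using below[OF that(1)] below[OF that(2)] by (intro in_omega_omega_iff_pad) auto
  then show "\<forall>x\<in>{u. (u, zs) \<in> omega_omega}. \<forall>y\<in>{u. (u, zs) \<in> omega_omega}.
       (x, y) \<in> omega_omega \<longleftrightarrow> (pad n x, pad n y) \<in> omega_pow n"
    by simp
  have zs_zs: "(zs, zs) \<in> omega_omega" using zs by (simp add: in_omega_omega)
  have surj: "x \<in> pad n ` {u. (u, zs) \<in> omega_omega}" if x: "(x, pad n zs) \<in> omega_pow n" for x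
  proof -
    let ?u = "dropWhile (\<lambda>x. x = 0) x"
    have "no_leading_zero ?u" using hd_dropWhile[of "\<lambda>x. x = 0" x] by blast
    moreover have "length x = n" using x by (simp add: in_omega_pow)
    moreover have "length ?u \<le> n" using calculation(2) length_dropWhile_le[of "\<lambda>x. x = 0" x] by simp
    moreover have pu: "pad n ?u = x" using pad_dropWhile_zero[of x] calculation(2) by simp
    ultimately have "(?u, zs) \<in> omega_omega"
      using in_omega_omega_iff_pad[OF _ zs, of ?u n] x by (simp add: n_def)
    then show ?thesis using pu by (metis image_eqI mem_Collect_eq)
  qed
  show "bij_betw (pad n) {u. (u, zs) \<in> omega_omega} {u. (u, pad n zs) \<in> omega_pow n}"
    unfolding bij_betw_def
  proof (intro conjI)
    show "inj_on (pad n) {u. (u, zs) \<in> omega_omega}"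
      using below pad_inj by (auto intro: inj_onI)
    show "pad n ` {u. (u, zs) \<in> omega_omega} = {u. (u, pad n zs) \<in> omega_pow n}"
      using pad_iff[OF _ zs_zs] surj by auto
  qed
qed

lemma derived_omega_omega:
  assumes "no_leading_zero zs" "zs \<noteq> []"
  shows "zs \<in> derived omega_omega e \<longleftrightarrow> e \<le> trailing_zeros zs"
proof -
  have "zs \<in> derived omega_omega e \<longleftrightarrow> pad (length zs) zs \<in> derived (omega_pow (length zs)) e"
    by (rule derived_initial_segment[OF trans_omega_omega trans_omega_pow
          omega_omega_initial_segment_iso[OF assms(1)]])
      (use assms in \<open>simp add: in_omega_omega\<close>)
  moreover have "pad (length zs) zs = zs" by (simp add: pad_def)
  moreover have "zs \<noteq> zeros (length zs)" using assms by (cases zs) auto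
  ultimately show ?thesis using derived_omega_pow[of zs "length zs" e] by simp
qed

section \<open>Derived ranks in L\<close>

lemma Inl_Field_Lgen [simp]: "Inl (k, c, xs) \<in> Field (Lgen a b) \<longleftrightarrow> 1 \<le> k \<and> c < a + k \<and> length xs = b + k"
  by (simp add: Lgen_def Field_blocks)

lemma Inr_Field_Lgen [simp]: "Inr zs \<in> Field (Lgen a b) \<longleftrightarrow> no_leading_zero zs"
  by (simp add: Lgen_def Field_omega_omega)

lemma in_Lgen:
  "(Inl (k, c, xs), Inl (k', c', xs')) \<in> Lgen a b \<longleftrightarrow>
     1 \<le> k \<and> 1 \<le> k' \<and> c < a + k \<and> length xs = b + k \<and> c' < a + k' \<and> length xs' = b + k' \<and>
     ((k \<noteq> k' \<and> k' \<le> k) \<or> (k = k' \<and> ((c \<noteq> c' \<and> c \<le> c') \<or> (c = c' \<and> (xs, xs') \<in> omega_pow (b + k)))))"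
  "(Inl (k, c, xs), Inr zs) \<in> Lgen a b \<longleftrightarrow> 1 \<le> k \<and> c < a + k \<and> length xs = b + k \<and> no_leading_zero zs"
  "(Inr zs, Inl q) \<notin> Lgen a b"
  "(Inr zs, Inr zs') \<in> Lgen a b \<longleftrightarrow> (zs, zs') \<in> omega_omega"
  by (auto simp: Lgen_def in_blocks Field_blocks Field_copies_omega_pow in_copies_omega_pow Field_omega_omega)

lemma Lgen_total:
  assumes "v \<in> Field (Lgen a b)" "w \<in> Field (Lgen a b)"
  shows "(v, w) \<in> Lgen a b \<or> (w, v) \<in> Lgen a b"
proof -
  have lenlex_total: "xs = ys \<or> (xs, ys) \<in> lenlex less_nat_rel \<or> (ys, xs) \<in> lenlex less_nat_rel" for xs ys
  proof -
    have "total (lenlex less_nat_rel)" by (rule total_lenlex) (auto simp: total_on_def)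
    then show ?thesis unfolding total_on_def by blast
  qed
  show ?thesis
  proof (cases v; cases w)
    fix q q' assume "v = Inl q" "w = Inl q'"
    moreover obtain k c xs k' c' xs' where "q = (k, c, xs)" "q' = (k', c', xs')" by (cases q, cases q')
    ultimately show ?thesis
      using assms lenlex_total[of xs xs'] by (auto simp: in_Lgen in_omega_pow lenlex_conv)
  next
    fix zs zs' assume "v = Inr zs" "w = Inr zs'"
    then show ?thesis using assms lenlex_total[of zs zs'] by (auto simp: in_Lgen in_omega_omega)
  qed (use assms in \<open>auto simp: Lgen_def\<close>)
qed

lemma Lgen_no_least: "u \<in> Field (Lgen a b) \<Longrightarrow> \<exists>u0. rless (Lgen a b) u0 u"
proof (cases u)
  case (Inl q)
  moreover obtain k c xs where "q = (k, c, xs)" by (cases q)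
  moreover assume "u \<in> Field (Lgen a b)"
  ultimately show ?thesis
    by (intro exI[of _ "Inl (k + 1, 0, zeros (b + (k + 1)))"]) (auto simp: rless_def in_Lgen)
next
  case (Inr zs)
  moreover assume "u \<in> Field (Lgen a b)"
  ultimately show ?thesis
    by (intro exI[of _ "Inl (1, 0, zeros (b + 1))"]) (auto simp: rless_def in_Lgen)
qed

text \<open>The derived rank of a point of Lgen a b: the number of trailing zeros in general,
  and at the starts of copies, blocks and of omega^omega the exponent of the limit
  reached there.\<close>
definition Lgen_rank :: "nat \<Rightarrow> (nat \<times> nat \<times> nat list) + nat list \<Rightarrow> nat" where
  "Lgen_rank b v = (case v of
      Inl (k, c, xs) \<Rightarrow> if xs = zeros (length xs) then (if c = 0 then b + k + 1 else b + k) else trailing_zeros xs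
    | Inr zs \<Rightarrow> if zs = [] then b + 1 else trailing_zeros zs)"

lemma derived_Lgen_blocks:
  assumes "(k, c, xs) \<in> Field (blocks a b)"
  shows "(k, c, xs) \<in> derived (blocks a b) e \<longleftrightarrow> e \<le> Lgen_rank b (Inl (k, c, xs))"
proof -
  have k: "1 \<le> k" "c < a + k" "length xs = b + k" using assms by (auto simp: Field_blocks)
  show ?thesis
  proof (cases "xs = zeros (b + k)")
    case True
    then show ?thesis
      using derived_blocks_block_start[OF k(1), of b a e] derived_blocks_copy_start[OF k(1) _ k(2), of b e] k(3)
      by (cases "c = 0") (simp_all add: Lgen_rank_def)
  next
    case False
    then show ?thesis using derived_blocks_nonzero[OF k False, of e] k(3) by (simp add: Lgen_rank_def)
  qed
qed

lemma derived_Lgen_omega_omega: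
  assumes "no_leading_zero zs"
  shows "Inr zs \<in> derived (Lgen a b) e \<longleftrightarrow> e \<le> Lgen_rank b (Inr zs)"
proof (cases "zs = []")
  case True
  show ?thesis
  proof (cases e)
    case 0 then show ?thesis using True by (simp add: Lgen_def Field_omega_omega)
  next
    case (Suc e')
    have "(1, 0, zeros (b + 1)) \<in> Field (blocks a b)" by (simp add: Field_blocks)
    then have nonempty: "Field (blocks a b) \<noteq> {}" by blast
    have "\<forall>u. \<not> rless omega_omega u []" by (auto simp: rless_def in_omega_omega)
    then have "Inr [] \<in> derived (Lgen a b) (Suc e') \<longleftrightarrow> cofinal (blocks a b) (derived (blocks a b) e')"
      unfolding Lgen_def by (intro derived_Suc_oplus_least nonempty) (simp add: Field_omega_omega)
    then show ?thesis using cofinal_derived_blocks[of a b e'] True Suc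
      by (simp add: Lgen_rank_def less_Suc_eq_le)
  qed
next
  case False
  have "rless omega_omega [] zs" using False assms by (simp add: rless_def in_omega_omega)
  then have "Inr zs \<in> derived (Lgen a b) e \<longleftrightarrow> zs \<in> derived omega_omega e"
    unfolding Lgen_def by (rule derived_oplus_Inr)
  then show ?thesis using derived_omega_omega[OF assms False] False by (simp add: Lgen_rank_def)
qed

lemma derived_Lgen:
  assumes "v \<in> Field (Lgen a b)"
  shows "v \<in> derived (Lgen a b) e \<longleftrightarrow> e \<le> Lgen_rank b v"
proof (cases v)
  case (Inl q)
  obtain k c xs where q: "q = (k, c, xs)" by (cases q)
  have qF: "q \<in> Field (blocks a b)" using assms Inl by (simp add: Lgen_def)
  have "v \<in> derived (Lgen a b) e \<longleftrightarrow> q \<in> derived (blocks a b) e"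
    using derived_oplus_Inl[OF qF] Inl by (simp add: Lgen_def)
  then show ?thesis using derived_Lgen_blocks qF q Inl by simp
next
  case (Inr zs)
  then show ?thesis using assms derived_Lgen_omega_omega by simp
qed

section \<open>Counting derived points below a point\<close>

definition last_derived_below :: "'a rel \<Rightarrow> nat \<Rightarrow> 'a \<Rightarrow> 'a \<Rightarrow> bool" where
  "last_derived_below r E x g \<longleftrightarrow> g \<in> derived r (Suc E) \<and> (g, x) \<in> r \<and>
     (\<forall>h\<in>derived r (Suc E). \<not> (rless r g h \<and> (h, x) \<in> r))"

definition derived_segment :: "'a rel \<Rightarrow> nat \<Rightarrow> 'a \<Rightarrow> 'a \<Rightarrow> 'a set" where
  "derived_segment r E x g = {w \<in> derived r E. (g, w) \<in> r \<and> rless r w x}"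

definition derived_count :: "'a rel \<Rightarrow> nat \<Rightarrow> 'a \<Rightarrow> nat \<Rightarrow> bool" where
  "derived_count r E x n \<longleftrightarrow> (\<exists>g. last_derived_below r E x g) \<and>
     (\<forall>g. last_derived_below r E x g \<longrightarrow> card (derived_segment r E x g) = n)"

lemma last_derived_below_in_Field: "last_derived_below r E x g \<Longrightarrow> g \<in> Field r"
  unfolding last_derived_below_def using derived_in_Field[of g r "Suc E"] by simp

lemma derived_segment_subset_Field: "derived_segment r E x g \<subseteq> Field r"
  unfolding derived_segment_def using derived_subset_Field[of r E] by blast

lemma derived_count_unique:
  assumes "derived_count r E x n" "derived_count r E x n'"
  shows "n = n'"
proof -
  obtain g where "last_derived_below r E x g" using assms(1) unfolding derived_count_def by blast
  then have "card (derived_segment r E x g) = n" "card (derived_segment r E x g) = n'"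
    using assms unfolding derived_count_def by simp_all
  then show ?thesis by simp
qed

lemma last_derived_below_unique:
  assumes total: "\<And>v w. v \<in> Field r \<Longrightarrow> w \<in> Field r \<Longrightarrow> (v, w) \<in> r \<or> (w, v) \<in> r"
    and "last_derived_below r E x g" "last_derived_below r E x g'"
  shows "g' = g"
proof (rule ccontr)
  assume ne: "g' \<noteq> g"
  have g: "g \<in> derived r (Suc E)" "(g, x) \<in> r" "\<forall>h\<in>derived r (Suc E). \<not> (rless r g h \<and> (h, x) \<in> r)"
    using assms(2) unfolding last_derived_below_def by blast+
  have g': "g' \<in> derived r (Suc E)" "(g', x) \<in> r" "\<forall>h\<in>derived r (Suc E). \<not> (rless r g' h \<and> (h, x) \<in> r)"
    using assms(3) unfolding last_derived_below_def by blast+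
  from total[OF derived_in_Field[OF g(1)] derived_in_Field[OF g'(1)]] show False
  proof
    assume "(g, g') \<in> r"
    then have "rless r g g'" using ne by (simp add: rless_def)
    then show False using g(3) g'(1,2) by blast
  next
    assume "(g', g) \<in> r"
    then have "rless r g' g" using ne by (simp add: rless_def)
    then show False using g'(3) g(1,2) by blast
  qed
qed

lemma last_derived_below_ord_iso:
  assumes bij: "bij_betw f (Field r) (Field s)"
    and ord: "\<forall>x\<in>Field r. \<forall>y\<in>Field r. (x, y) \<in> r \<longleftrightarrow> (f x, f y) \<in> s"
    and x: "x \<in> Field r" and g: "g \<in> Field r"
  shows "last_derived_below s E (f x) (f g) \<longleftrightarrow> last_derived_below r E x g"
proof -
  have "rless s (f g) (f h) \<and> (f h, f x) \<in> s \<longleftrightarrow> rless r g h \<and> (h, x) \<in> r"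
    if "h \<in> derived r (Suc E)" for h
    using rless_ord_iso[OF bij ord g derived_in_Field[OF that]] ord derived_in_Field[OF that] x by simp
  then have "(\<forall>h\<in>derived s (Suc E). \<not> (rless s (f g) h \<and> (h, f x) \<in> s)) \<longleftrightarrow>
      (\<forall>h\<in>derived r (Suc E). \<not> (rless r g h \<and> (h, x) \<in> r))"
    unfolding derived_ord_iso_image[OF bij ord] by auto
  moreover have "f g \<in> derived s (Suc E) \<longleftrightarrow> g \<in> derived r (Suc E)"
    using derived_ord_iso[OF bij ord g] by simp
  moreover have "(f g, f x) \<in> s \<longleftrightarrow> (g, x) \<in> r" using ord g x by blast
  ultimately show ?thesis unfolding last_derived_below_def by blast
qed

lemma derived_segment_ord_iso:
  assumes bij: "bij_betw f (Field r) (Field s)"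
    and ord: "\<forall>x\<in>Field r. \<forall>y\<in>Field r. (x, y) \<in> r \<longleftrightarrow> (f x, f y) \<in> s"
    and x: "x \<in> Field r" and g: "g \<in> Field r"
  shows "derived_segment s E (f x) (f g) = f ` derived_segment r E x g"
proof -
  have "(f g, f w) \<in> s \<and> rless s (f w) (f x) \<longleftrightarrow> (g, w) \<in> r \<and> rless r w x"
    if "w \<in> derived r E" for w
    using rless_ord_iso[OF bij ord derived_in_Field[OF that] x] ord derived_in_Field[OF that] g by simp
  then show ?thesis unfolding derived_segment_def derived_ord_iso_image[OF bij ord] by auto
qed

lemma derived_count_ord_iso:
  assumes bij: "bij_betw f (Field r) (Field s)"
    and ord: "\<forall>x\<in>Field r. \<forall>y\<in>Field r. (x, y) \<in> r \<longleftrightarrow> (f x, f y) \<in> s"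
    and x: "x \<in> Field r" and count: "derived_count r E x n"
  shows "derived_count s E (f x) n"
  unfolding derived_count_def
proof (intro conjI allI impI)
  obtain g where g: "last_derived_below r E x g" using count unfolding derived_count_def by blast
  show "\<exists>g'. last_derived_below s E (f x) g'"
    using g last_derived_below_ord_iso[OF bij ord x last_derived_below_in_Field[OF g]] by blast
next
  fix g' assume g': "last_derived_below s E (f x) g'"
  then have "g' \<in> f ` derived r (Suc E)"
    unfolding last_derived_below_def derived_ord_iso_image[OF bij ord] by blast
  then obtain g where g: "g \<in> derived r (Suc E)" "g' = f g" by blast
  have gF: "g \<in> Field r" using g(1) by (rule derived_in_Field)
  have "inj_on f (derived_segment r E x g)"
    using bij derived_segment_subset_Field unfolding bij_betw_def by (rule inj_on_subset[OF conjunct1])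
  then have "card (derived_segment s E (f x) g') = card (derived_segment r E x g)"
    using derived_segment_ord_iso[OF bij ord x gF] g(2) by (simp add: card_image)
  also have "\<dots> = n"
    using count last_derived_below_ord_iso[OF bij ord x gF] g' g(2) unfolding derived_count_def by blast
  finally show "card (derived_segment s E (f x) g') = n" .
qed

lemma last_derived_below_osum:
  assumes R: "antisym R" "j \<in> Field R"
    and no_least: "\<forall>v\<in>Field (M j). \<exists>v0. rless (M j) v0 v"
    and u: "u \<in> Field (M j)" and g: "g \<in> Field (M j)"
  shows "last_derived_below (osum R M) E (j, u) (j, g) \<longleftrightarrow> last_derived_below (M j) E u g"
proof -
  let ?S = "osum R M"
  have derived_j: "(j, v) \<in> derived ?S e \<longleftrightarrow> v \<in> derived (M j) e" if "v \<in> Field (M j)" for v e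
    by (rule derived_osum_summand[of R j M, OF R no_least that])
  have "(\<exists>h\<in>derived ?S (Suc E). rless ?S (j, g) h \<and> (h, (j, u)) \<in> ?S) \<longleftrightarrow>
      (\<exists>h\<in>derived (M j) (Suc E). rless (M j) g h \<and> (h, u) \<in> M j)"
  proof
    assume "\<exists>h\<in>derived ?S (Suc E). rless ?S (j, g) h \<and> (h, (j, u)) \<in> ?S"
    then obtain l v where h: "(l, v) \<in> derived ?S (Suc E)" "rless ?S (j, g) (l, v)" "((l, v), (j, u)) \<in> ?S"
      by auto
    then have "l = j" using R(1) by (auto simp: rless_osum in_osum dest: antisymD)
    then show "\<exists>h\<in>derived (M j) (Suc E). rless (M j) g h \<and> (h, u) \<in> M j"
      using h derived_j by (auto simp: rless_osum in_osum)
  next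
    assume "\<exists>h\<in>derived (M j) (Suc E). rless (M j) g h \<and> (h, u) \<in> M j"
    then obtain h where h: "h \<in> derived (M j) (Suc E)" "rless (M j) g h" "(h, u) \<in> M j" by blast
    then have "(j, h) \<in> derived ?S (Suc E) \<and> rless ?S (j, g) (j, h) \<and> ((j, h), (j, u)) \<in> ?S"
      using derived_j derived_in_Field[OF h(1)] g u R(2) by (auto simp: rless_osum in_osum)
    then show "\<exists>h\<in>derived ?S (Suc E). rless ?S (j, g) h \<and> (h, (j, u)) \<in> ?S" by blast
  qed
  then show ?thesis using derived_j[OF g] g u R(2) unfolding last_derived_below_def by (auto simp: in_osum)
qed

lemma last_derived_below_osum_in_summand:
  assumes R: "antisym R" "j \<in> Field R"
    and no_least: "\<forall>v\<in>Field (M j). \<exists>v0. rless (M j) v0 v"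
    and u: "u \<in> Field (M j)" and g: "last_derived_below (M j) E u g"
    and g': "last_derived_below (osum R M) E (j, u) g'"
  shows "\<exists>v. g' = (j, v) \<and> v \<in> Field (M j)"
proof -
  have gF: "g \<in> Field (M j)" using g by (rule last_derived_below_in_Field)
  obtain l v where lv: "g' = (l, v)" by (cases g')
  have "l = j"
  proof (rule ccontr)
    assume "l \<noteq> j"
    then have "rless (osum R M) g' (j, g)"
      using g' lv gF unfolding last_derived_below_def by (auto simp: rless_def in_osum)
    moreover have "(j, g) \<in> derived (osum R M) (Suc E)" "((j, g), (j, u)) \<in> osum R M"
      using last_derived_below_osum[of R j M, OF R no_least u gF] g unfolding last_derived_below_def by blast+
    ultimately show False using g' unfolding last_derived_below_def by blast
  qed
  then show ?thesis using g' lv unfolding last_derived_below_def by (auto simp: in_osum)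
qed

lemma derived_segment_osum:
  assumes R: "antisym R" "j \<in> Field R"
    and no_least: "\<forall>v\<in>Field (M j). \<exists>v0. rless (M j) v0 v"
    and u: "u \<in> Field (M j)" and g: "g \<in> Field (M j)"
  shows "derived_segment (osum R M) E (j, u) (j, g) = Pair j ` derived_segment (M j) E u g"
proof
  have derived_j: "(j, v) \<in> derived (osum R M) e \<longleftrightarrow> v \<in> derived (M j) e"
    if "v \<in> Field (M j)" for v e
    by (rule derived_osum_summand[of R j M, OF R no_least that])
  show "derived_segment (osum R M) E (j, u) (j, g) \<subseteq> Pair j ` derived_segment (M j) E u g"
  proof
    fix w assume w: "w \<in> derived_segment (osum R M) E (j, u) (j, g)"
    obtain l v where lv: "w = (l, v)" by (cases w)
    have "l = j"
      using w lv R(1) unfolding derived_segment_def by (auto simp: rless_osum in_osum dest: antisymD)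
    then show "w \<in> Pair j ` derived_segment (M j) E u g"
      using w lv derived_j unfolding derived_segment_def by (auto simp: rless_osum in_osum)
  qed
  show "Pair j ` derived_segment (M j) E u g \<subseteq> derived_segment (osum R M) E (j, u) (j, g)"
    using derived_j derived_in_Field[of _ "M j" E] g u R(2) unfolding derived_segment_def
    by (auto simp: rless_osum in_osum)
qed

lemma derived_count_osum:
  assumes R: "antisym R" "j \<in> Field R"
    and no_least: "\<forall>v\<in>Field (M j). \<exists>v0. rless (M j) v0 v"
    and u: "u \<in> Field (M j)" and count: "derived_count (M j) E u n"
  shows "derived_count (osum R M) E (j, u) n"
  unfolding derived_count_def
proof (intro conjI allI impI)
  obtain g where g: "last_derived_below (M j) E u g" using count unfolding derived_count_def by blast
  show "\<exists>g'. last_derived_below (osum R M) E (j, u) g'"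
    using g last_derived_below_osum[of R j M, OF R no_least u last_derived_below_in_Field[OF g]] by blast
  fix g' assume g': "last_derived_below (osum R M) E (j, u) g'"
  then obtain v where v: "g' = (j, v)" "v \<in> Field (M j)"
    using last_derived_below_osum_in_summand[of R j M, OF R no_least u g] by blast
  have "card (derived_segment (osum R M) E (j, u) g') = card (derived_segment (M j) E u v)"
    using derived_segment_osum[of R j M, OF R no_least u v(2)] v(1) by (simp add: card_image inj_on_def)
  also have "\<dots> = n"
    using count last_derived_below_osum[of R j M, OF R no_least u v(2)] g' v(1) unfolding derived_count_def by blast
  finally show "card (derived_segment (osum R M) E (j, u) g') = n" .
qed

section \<open>The invariant of a summand L(j)\<close>

text \<open>For k \<ge> block_bound u the blocks k and k - 1 lie to the left of u, and the points of
  omega^omega below u have rank less than b + k.\<close>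
definition block_bound :: "(nat \<times> nat \<times> nat list) + nat list \<Rightarrow> nat" where
  "block_bound u = (case u of Inl (k, _) \<Rightarrow> k + 2 | Inr zs \<Rightarrow> length zs + 2)"

definition block_start :: "nat \<Rightarrow> nat \<Rightarrow> (nat \<times> nat \<times> nat list) + nat list" where
  "block_start b k = Inl (k, 0, zeros (b + k))"

definition block_derived_points :: "nat \<Rightarrow> nat \<Rightarrow> nat \<Rightarrow> ((nat \<times> nat \<times> nat list) + nat list) set" where
  "block_derived_points a b k =
     (\<lambda>c. Inl (k, c, zeros (b + k))) ` {..<a + k} \<union> {Inl (k - 1, 0, zeros (b + k - 1))}"

lemma card_block_derived_points: "2 \<le> k \<Longrightarrow> card (block_derived_points a b k) = a + k + 1"
proof -
  assume k: "2 \<le> k"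
  have "inj_on (\<lambda>c. Inl (k, c, zeros (b + k)) :: (nat \<times> nat \<times> nat list) + nat list) {..<a + k}"
    by (auto simp: inj_on_def)
  moreover have "Inl (k - 1, 0, zeros (b + k - 1)) \<notin>
      (\<lambda>c. Inl (k, c, zeros (b + k)) :: (nat \<times> nat \<times> nat list) + nat list) ` {..<a + k}"
    using k by auto
  ultimately show ?thesis unfolding block_derived_points_def by (simp add: card_image)
qed

lemma block_bound_ge_2: "block_bound u \<le> k \<Longrightarrow> 2 \<le> k"
  by (auto simp: block_bound_def split: sum.splits)

lemma trailing_zeros_less_if_in_omega_omega:
  "(zs, zs') \<in> omega_omega \<Longrightarrow> zs \<noteq> [] \<Longrightarrow> trailing_zeros zs < length zs"
  by (intro trailing_zeros_less_length) (cases zs, auto simp: in_omega_omega)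

lemma block_start_below:
  assumes "u \<in> Field (Lgen a b)" "block_bound u \<le> k"
  shows "block_start b k \<in> derived (Lgen a b) (Suc (b + k))" "(block_start b k, u) \<in> Lgen a b"
proof -
  have k: "2 \<le> k" using assms(2) by (rule block_bound_ge_2)
  then have "block_start b k \<in> Field (Lgen a b)" by (simp add: block_start_def)
  then show "block_start b k \<in> derived (Lgen a b) (Suc (b + k))"
    using derived_Lgen by (simp add: Lgen_rank_def block_start_def)
  show "(block_start b k, u) \<in> Lgen a b"
  proof (cases u)
    case (Inl q)
    moreover obtain ku c xs where "q = (ku, c, xs)" by (cases q)
    ultimately show ?thesis using assms k by (auto simp: block_start_def in_Lgen block_bound_def)
  next
    case (Inr zs)
    then show ?thesis using assms k by (auto simp: block_start_def in_Lgen)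
  qed
qed

lemma Lgen_rank_between:
  assumes "block_bound u \<le> k" "rless (Lgen a b) (block_start b k) v" "(v, u) \<in> Lgen a b"
  shows "Lgen_rank b v \<le> b + k"
proof (cases v)
  case (Inl q)
  obtain k' c xs where q: "q = (k', c, xs)" by (cases q)
  have "k' \<le> k" "length xs = b + k'" "k' = k \<and> c = 0 \<longrightarrow> xs \<noteq> zeros (b + k)"
    using assms(2) Inl q by (auto simp: block_start_def rless_def in_Lgen)
  then show ?thesis
    using Inl q trailing_zeros_less_length[of xs] by (auto simp: Lgen_rank_def)
next
  case (Inr zs)
  then obtain zs' where u: "u = Inr zs'" "(zs, zs') \<in> omega_omega"
    using assms(3) by (cases u) (auto simp: in_Lgen)
  have "length zs \<le> k" using length_le_if_in_omega_omega[OF u(2)] assms(1) u(1) by (simp add: block_bound_def)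
  then show ?thesis using Inr trailing_zeros_less_if_in_omega_omega[OF u(2)] block_bound_ge_2[OF assms(1)]
    by (auto simp: Lgen_rank_def)
qed

lemma derived_segment_Lgen_subset:
  assumes k: "block_bound u \<le> k"
  shows "derived_segment (Lgen a b) (b + k) u (block_start b k) \<subseteq> block_derived_points a b k"
proof
  fix v assume "v \<in> derived_segment (Lgen a b) (b + k) u (block_start b k)"
  then have vD: "v \<in> derived (Lgen a b) (b + k)" and gv: "(block_start b k, v) \<in> Lgen a b"
    and vu: "rless (Lgen a b) v u"
    unfolding derived_segment_def by auto
  have rank: "b + k \<le> Lgen_rank b v" using derived_Lgen[OF derived_in_Field[OF vD]] vD by simp
  show "v \<in> block_derived_points a b k"
  proof (cases v)
    case (Inl q)
    obtain k' c xs where q: "q = (k', c, xs)" by (cases q)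
    have h: "k' \<le> k" "length xs = b + k'" "c < a + k'" "1 \<le> k'"
      using gv Inl q by (auto simp: block_start_def in_Lgen)
    have "xs = zeros (length xs)"
      using trailing_zeros_less_length[of xs] rank Inl q h by (auto simp: Lgen_rank_def split: if_splits)
    moreover have "k' = k \<or> (c = 0 \<and> k' = k - 1)"
      using rank calculation Inl q h by (auto simp: Lgen_rank_def split: if_splits)
    ultimately show ?thesis using Inl q h by (auto simp: block_derived_points_def)
  next
    case (Inr zs)
    then obtain zs' where u: "u = Inr zs'" "(zs, zs') \<in> omega_omega"
      using vu by (cases u) (auto simp: rless_def in_Lgen)
    have "length zs + 2 \<le> k" using length_le_if_in_omega_omega[OF u(2)] k u(1) by (simp add: block_bound_def)
    then show ?thesis using Inr rank trailing_zeros_less_if_in_omega_omega[OF u(2)]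
      by (auto simp: Lgen_rank_def split: if_splits)
  qed
qed

lemma block_derived_points_subset:
  assumes u: "u \<in> Field (Lgen a b)" and k: "block_bound u \<le> k"
  shows "block_derived_points a b k \<subseteq> derived_segment (Lgen a b) (b + k) u (block_start b k)"
proof
  have k2: "2 \<le> k" using k by (rule block_bound_ge_2)
  fix v assume "v \<in> block_derived_points a b k"
  then obtain k' c where v: "v = Inl (k', c, zeros (b + k'))" "c < a + k'" "k' = k \<or> (k' = k - 1 \<and> c = 0)"
    unfolding block_derived_points_def using k2 by (auto simp: add_diff_assoc)
  have vF: "v \<in> Field (Lgen a b)" using v k2 by auto
  have "v \<in> derived (Lgen a b) (b + k)" using derived_Lgen[OF vF] v k2 by (auto simp: Lgen_rank_def)
  moreover have "(block_start b k, v) \<in> Lgen a b"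
    using v k2 by (auto simp: block_start_def in_Lgen in_omega_pow)
  moreover have "rless (Lgen a b) v u"
  proof (cases u)
    case (Inl q)
    moreover obtain ku c' xs where "q = (ku, c', xs)" by (cases q)
    ultimately show ?thesis using u k k2 v by (auto simp: rless_def in_Lgen block_bound_def)
  next
    case (Inr zs)
    then show ?thesis using u k2 v by (auto simp: rless_def in_Lgen)
  qed
  ultimately show "v \<in> derived_segment (Lgen a b) (b + k) u (block_start b k)"
    unfolding derived_segment_def by blast
qed

lemma derived_count_Lgen:
  assumes u: "u \<in> Field (Lgen a b)" and k: "block_bound u \<le> k"
  shows "derived_count (Lgen a b) (b + k) u (a + k + 1)"
proof -
  have last: "last_derived_below (Lgen a b) (b + k) u (block_start b k)"
    unfolding last_derived_below_def
  proof (intro conjI ballI notI)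
    show "block_start b k \<in> derived (Lgen a b) (Suc (b + k))" "(block_start b k, u) \<in> Lgen a b"
      using block_start_below[OF u k] by auto
  next
    fix h assume h: "h \<in> derived (Lgen a b) (Suc (b + k))"
      "rless (Lgen a b) (block_start b k) h \<and> (h, u) \<in> Lgen a b"
    have "Suc (b + k) \<le> Lgen_rank b h" using derived_Lgen[OF derived_in_Field[OF h(1)]] h(1) by simp
    moreover have "Lgen_rank b h \<le> b + k" using Lgen_rank_between[OF k] h(2) by blast
    ultimately show False by simp
  qed
  show ?thesis
    unfolding derived_count_def
  proof (intro conjI allI impI)
    show "\<exists>g. last_derived_below (Lgen a b) (b + k) u g" using last by blast
  next
    fix g assume g: "last_derived_below (Lgen a b) (b + k) u g"
    have "g = block_start b k" by (rule last_derived_below_unique[OF _ last g]) (rule Lgen_total)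
    then show "card (derived_segment (Lgen a b) (b + k) u g) = a + k + 1"
      using subset_antisym[OF derived_segment_Lgen_subset[OF k] block_derived_points_subset[OF u k]]
        card_block_derived_points[OF block_bound_ge_2[OF k]] by simp
  qed
qed

definition int_order :: "(int \<Rightarrow> bool) \<Rightarrow> int rel" where
  "int_order P = {(i, j). P i \<and> P j \<and> i \<le> j}"

lemma Field_int_order [simp]: "Field (int_order P) = {i. P i}"
  by (auto simp: Field_def int_order_def)

lemma antisym_int_order: "antisym (int_order P)"
  by (auto simp: antisym_def int_order_def)

lemma L_eq_Lgen: "L j = Lgen (nat (- j)) (nat j)"
  by (simp add: L_def)

lemma derived_count_sum_L:
  assumes j: "P j" and u: "u \<in> Field (L j)"
  shows "\<exists>E0. \<forall>E\<ge>E0. derived_count (osum (int_order P) L) E (j, u) (nat (int E - j + 1))"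
proof (intro exI allI impI)
  fix E assume E: "nat j + block_bound u \<le> E"
  define k where "k = E - nat j"
  have k: "block_bound u \<le> k" and Ek: "E = nat j + k" using E unfolding k_def by auto
  have "derived_count (L j) E u (nat (- j) + k + 1)"
    using derived_count_Lgen[of u "nat (- j)" "nat j" k] u k Ek by (simp add: L_eq_Lgen)
  moreover have "nat (- j) + k + 1 = nat (int E - j + 1)" using Ek by linarith
  moreover have "\<forall>v\<in>Field (L j). \<exists>v0. rless (L j) v0 v"
    using Lgen_no_least by (simp add: L_eq_Lgen)
  ultimately show "derived_count (osum (int_order P) L) E (j, u) (nat (int E - j + 1))"
    using derived_count_osum[OF antisym_int_order, of j P L] j u by simp
qed

lemma ord_iso_sum_L_preserves_index:
  assumes bij: "bij_betw f (Field (osum (int_order P) L)) (Field (osum (int_order Q) L))"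
    and ord: "\<forall>x\<in>Field (osum (int_order P) L). \<forall>y\<in>Field (osum (int_order P) L).
      (x, y) \<in> osum (int_order P) L \<longleftrightarrow> (f x, f y) \<in> osum (int_order Q) L"
    and x: "(i, u) \<in> Field (osum (int_order P) L)" and fx: "f (i, u) = (j, v)"
  shows "i = j"
proof -
  have "(j, v) \<in> Field (osum (int_order Q) L)" using bij x fx unfolding bij_betw_def by force
  then have "Q j" "v \<in> Field (L j)" by (auto simp: Field_osum)
  then obtain E1 where E1: "\<forall>E\<ge>E1. derived_count (osum (int_order Q) L) E (j, v) (nat (int E - j + 1))"
    using derived_count_sum_L by blast
  have "P i" "u \<in> Field (L i)" using x by (auto simp: Field_osum)
  then obtain E0 where E0: "\<forall>E\<ge>E0. derived_count (osum (int_order P) L) E (i, u) (nat (int E - i + 1))"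
    using derived_count_sum_L by blast
  define E where "E = E0 + E1 + nat \<bar>i\<bar> + nat \<bar>j\<bar>"
  have "E0 \<le> E" "E1 \<le> E" unfolding E_def by simp_all
  have "derived_count (osum (int_order P) L) E (i, u) (nat (int E - i + 1))"
    using E0 \<open>E0 \<le> E\<close> by blast
  then have "derived_count (osum (int_order Q) L) E (j, v) (nat (int E - i + 1))"
    using derived_count_ord_iso[OF bij ord x] fx by metis
  moreover have "derived_count (osum (int_order Q) L) E (j, v) (nat (int E - j + 1))"
    using E1 \<open>E1 \<le> E\<close> by blast
  ultimately have "nat (int E - i + 1) = nat (int E - j + 1)" by (rule derived_count_unique)
  then show ?thesis unfolding E_def by linarith
qed

lemma not_ord_iso_sum_L:
  assumes "Q j" "\<not> P j"
  shows "\<not> ord_iso (osum (int_order P) L) (osum (int_order Q) L)"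
proof
  assume "ord_iso (osum (int_order P) L) (osum (int_order Q) L)"
  then obtain f where bij: "bij_betw f (Field (osum (int_order P) L)) (Field (osum (int_order Q) L))"
    and ord: "\<forall>x\<in>Field (osum (int_order P) L). \<forall>y\<in>Field (osum (int_order P) L).
      (x, y) \<in> osum (int_order P) L \<longleftrightarrow> (f x, f y) \<in> osum (int_order Q) L"
    unfolding ord_iso_def by blast
  have "(j, Inr []) \<in> Field (osum (int_order Q) L)"
    using assms(1) by (simp add: Field_osum L_eq_Lgen)
  then obtain i u where iu: "(i, u) \<in> Field (osum (int_order P) L)" "f (i, u) = (j, Inr [])"
    using bij unfolding bij_betw_def by force
  then have "P i" by (simp add: Field_osum)
  moreover have "i = j" using ord_iso_sum_L_preserves_index[OF bij ord iu] .
  ultimately show False using assms(2) by simp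
qed

theorem mainTheorem5:
  shows "\<not> ord_iso I_even I_odd \<and> \<not> ord_iso I_even I_all \<and> \<not> ord_iso I_odd I_all"
proof -
  have "I_even = osum (int_order even) L" "I_odd = osum (int_order odd) L"
    "I_all = osum (int_order (\<lambda>_. True)) L"
    by (simp_all add: I_even_def I_odd_def I_all_def int_order_def)
  then show ?thesis
    using not_ord_iso_sum_L[of odd 1 even] not_ord_iso_sum_L[of "\<lambda>_. True" 1 even]
      not_ord_iso_sum_L[of "\<lambda>_. True" 0 odd]
    by simp
qed

end
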